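(* Let $n\ge 1$, $k\ge 2$, $m\ge 1$ be integers and let $P_* \in \mathrm{Hom}(\Gamma_{n,k},\mathcal{D}(\mathbb{R}^m,0))$ satisfy $D^{(1)}_0P_*^a = k^{-1}I$ and $D^{(1)}_0P_*^{b_i}=I$ for all $i=1,\dots,n$. Then there exists a $C^1_{loc}$-neighborhood $\mathcal{U}$ of $P_*$ in $\mathrm{Hom}(\Gamma_{n,k},\mathcal{D}(\mathbb{R}^m,0))$ such that $D^{(1)}_0P^{b_i} = I$ for all $P\in\mathcal{U}$ and all $i=1,\dots,n$.
   Context: $\Gamma_{n,k} = \langle a, b_1,\dots,b_n \mid a b_i a^{-1} = b_i^k,\ b_i b_j = b_j b_i\rangle$. $\mathcal{D}(\mathbb{R}^m,0)$ is the group of germs at $0$ of local diffeomorphisms of $\mathbb{R}^m$ fixing $0$; $D^{(1)}_0F$ is the derivative at $0$. The $C^1_{loc}$-topology on $\mathcal{D}(\mathbb{R}^m,0)$ is given by the pseudo-distance $d(F,G)=\|D^{(1)}_0F-D^{(1)}_0G\|$ (operator norm), and $\mathrm{Hom}(\Gamma_{n,k},\mathcal{D}(\mathbb{R}^m,0))$ carries the induced product topology (convergence of $P^\gamma$ for each $\gamma$). We write $P^\gamma=P(\gamma)$. *)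

theory Defs
  imports "HOL-Analysis.Analysis"
begin

text \<open>Germs at 0 of local diffeomorphisms of R^m fixing 0, represented by
representative maps. Dimension m is the (finite, nonempty) index type 'm.\<close>

definition local_diffeo :: "(real^'m \<Rightarrow> real^'m) \<Rightarrow> bool" where
  "local_diffeo F \<longleftrightarrow> F 0 = 0 \<and>
     (\<exists>U V G. open U \<and> 0 \<in> U \<and> open V \<and> homeomorphism U V F G \<and>
        (\<forall>x\<in>U. F differentiable (at x)) \<and> (\<forall>y\<in>V. G differentiable (at y)))"

definition germ_eq :: "(real^'m \<Rightarrow> real^'m) \<Rightarrow> (real^'m \<Rightarrow> real^'m) \<Rightarrow> bool" where
  "germ_eq F G \<longleftrightarrow> (\<forall>\<^sub>F x in nhds 0. F x = G x)"

definition germ_inv :: "(real^'m \<Rightarrow> real^'m) \<Rightarrow> (real^'m \<Rightarrow> real^'m)" where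
  "germ_inv F = (SOME G. local_diffeo G \<and> germ_eq (F \<circ> G) id \<and> germ_eq (G \<circ> F) id)"

definition D0 :: "(real^'m \<Rightarrow> real^'m) \<Rightarrow> (real^'m \<Rightarrow> real^'m)" where
  "D0 F = frechet_derivative F (at 0)"

text \<open>The C^1_loc pseudo-distance d(F,G) = operator norm of D0 F - D0 G.\<close>
definition dC1 :: "(real^'m \<Rightarrow> real^'m) \<Rightarrow> (real^'m \<Rightarrow> real^'m) \<Rightarrow> real" where
  "dC1 F G = onorm (\<lambda>x. D0 F x - D0 G x)"

text \<open>A homomorphism Gamma_{n,k} \<rightarrow> D(R^m,0) is given by the images (fa, fb i), i < n,
 of the generators a, b_1..b_n (b_{i+1} is indexed by i), which are germs of local
 diffeomorphisms satisfying the defining relations as germs: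
 a b_i a^{-1} = b_i^k (written as a b_i = b_i^k a) and b_i b_j = b_j b_i.\<close>
definition is_hom :: "nat \<Rightarrow> nat \<Rightarrow> (real^'m \<Rightarrow> real^'m) \<Rightarrow> (nat \<Rightarrow> real^'m \<Rightarrow> real^'m) \<Rightarrow> bool" where
  "is_hom n k fa fb \<longleftrightarrow> local_diffeo fa \<and> (\<forall>i<n. local_diffeo (fb i)) \<and>
     (\<forall>i<n. germ_eq (fa \<circ> fb i) ((fb i ^^ k) \<circ> fa)) \<and>
     (\<forall>i<n. \<forall>j<n. germ_eq (fb i \<circ> fb j) (fb j \<circ> fb i))"

text \<open>Elements of Gamma_{n,k} are represented by words in the generators and their
 inverses: a letter (None, e) is a^(+-1), (Some i, e) is b_i^(+-1); e = True means exponent +1.\<close>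
definition valid_word :: "nat \<Rightarrow> (nat option \<times> bool) list \<Rightarrow> bool" where
  "valid_word n w \<longleftrightarrow> (\<forall>x\<in>set w. \<forall>i. fst x = Some i \<longrightarrow> i < n)"

fun gen_map :: "(real^'m \<Rightarrow> real^'m) \<Rightarrow> (nat \<Rightarrow> real^'m \<Rightarrow> real^'m) \<Rightarrow> nat option \<times> bool \<Rightarrow> (real^'m \<Rightarrow> real^'m)" where
  "gen_map fa fb (None, e) = (if e then fa else germ_inv fa)"
| "gen_map fa fb (Some i, e) = (if e then fb i else germ_inv (fb i))"

fun eval_word :: "(real^'m \<Rightarrow> real^'m) \<Rightarrow> (nat \<Rightarrow> real^'m \<Rightarrow> real^'m) \<Rightarrow> (nat option \<times> bool) list \<Rightarrow> (real^'m \<Rightarrow> real^'m)" where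
  "eval_word fa fb [] = id"
| "eval_word fa fb (x # w) = gen_map fa fb x \<circ> eval_word fa fb w"

text \<open>U is a neighbourhood of P = (fa, fb) in Hom(Gamma_{n,k}, D(R^m,0)) with the product
 topology induced by the C^1_loc pseudo-distance: U consists of homomorphisms and contains a
 basic open set {Q. d(Q^gamma, P^gamma) < eps for gamma in a finite set}.\<close>
definition C1loc_nbhd :: "nat \<Rightarrow> nat \<Rightarrow> (real^'m \<Rightarrow> real^'m) \<Rightarrow> (nat \<Rightarrow> real^'m \<Rightarrow> real^'m)
     \<Rightarrow> ((real^'m \<Rightarrow> real^'m) \<times> (nat \<Rightarrow> real^'m \<Rightarrow> real^'m)) set \<Rightarrow> bool" where
  "C1loc_nbhd n k fa fb U \<longleftrightarrow> U \<subseteq> {(ga, gb). is_hom n k ga gb} \<and>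
     (\<exists>W \<epsilon>. finite W \<and> (\<forall>w\<in>W. valid_word n w) \<and> \<epsilon> > 0 \<and>
        {(ga, gb). is_hom n k ga gb \<and>
           (\<forall>w\<in>W. dC1 (eval_word ga gb w) (eval_word fa fb w) < \<epsilon>)} \<subseteq> U)"

end

theory Submission
  imports Defs
begin

text \<open>At the level of derivatives the relation a b_i a^-1 = b_i^k reads A B = B^k A.
  Write B = I + E with e = \<parallel>E\<parallel> small. Then B^k - I = k E + O(e^2) has norm about k e,
  while A E = (B^k - I) A with A close to I/k forces \<parallel>B^k - I\<parallel> to be about e. Since
  k \<ge> 2 these two estimates are incompatible unless e = 0. Every homomorphism that is
  C^1-close to P_* on the generators satisfies both smallness hypotheses.\<close>

lemma bounded_linear_funpow:
  fixes f :: "'a::real_normed_vector \<Rightarrow> 'a"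
  assumes "bounded_linear f"
  shows "bounded_linear (f ^^ j)"
proof (induction j)
  case 0
  show ?case by (simp add: id_def bounded_linear_ident)
next
  case (Suc j)
  then show ?case using bounded_linear_compose[OF assms] by (simp add: comp_def)
qed

lemma onorm_le_abs_add_onorm_sub_scaleR:
  fixes f :: "'a::real_normed_vector \<Rightarrow> 'a"
  assumes "bounded_linear f"
  shows "onorm f \<le> \<bar>c\<bar> + onorm (\<lambda>x. f x - c *\<^sub>R x)"
proof -
  have bl_sub: "bounded_linear (\<lambda>x. f x - c *\<^sub>R x)"
    by (intro bounded_linear_sub assms bounded_linear_scaleR_right bounded_linear_ident)
  have "onorm f = onorm (\<lambda>x. (f x - c *\<^sub>R x) + c *\<^sub>R x)" by simp
  also have "\<dots> \<le> onorm (\<lambda>x. f x - c *\<^sub>R x) + onorm (\<lambda>x::'a. c *\<^sub>R x)"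
    by (intro onorm_triangle bl_sub bounded_linear_scaleR_right bounded_linear_ident)
  also have "onorm (\<lambda>x::'a. c *\<^sub>R x) = \<bar>c\<bar> * onorm (\<lambda>x::'a. x)"
    by (rule onorm_scaleR[OF bounded_linear_ident])
  also have "\<dots> \<le> \<bar>c\<bar>" using onorm_id_le[where 'a='a] by (simp add: mult_left_le)
  finally show ?thesis by simp
qed

lemma onorm_comp_near_scaleR_ge:
  fixes R :: "'a::real_normed_vector \<Rightarrow> 'b::real_normed_vector" and A :: "'a \<Rightarrow> 'a"
  assumes blR: "bounded_linear R" and blA: "bounded_linear A"
  shows "\<bar>c\<bar> * onorm R \<le> onorm (R \<circ> A) + onorm R * onorm (\<lambda>x. A x - c *\<^sub>R x)"
proof -
  define D where "D = (\<lambda>x. A x - c *\<^sub>R x)"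
  have blD: "bounded_linear D" unfolding D_def
    by (intro bounded_linear_sub blA bounded_linear_scaleR_right bounded_linear_ident)
  have lR: "linear R" using blR bounded_linear.linear by blast
  have "(\<lambda>x. c *\<^sub>R R x) = (\<lambda>x. (R \<circ> A) x + - (R \<circ> D) x)"
    by (auto simp: fun_eq_iff D_def linear_diff[OF lR] linear_scale[OF lR])
  then have "\<bar>c\<bar> * onorm R = onorm (\<lambda>x. (R \<circ> A) x + - (R \<circ> D) x)"
    using onorm_scaleR[OF blR, of c] by simp
  also have "\<dots> \<le> onorm (R \<circ> A) + onorm (\<lambda>x. - (R \<circ> D) x)"
    using onorm_triangle[OF bounded_linear_compose[OF blR blA]
        bounded_linear_minus[OF bounded_linear_compose[OF blR blD]]]
    by (simp add: comp_def)
  also have "onorm (\<lambda>x. - (R \<circ> D) x) \<le> onorm R * onorm D"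
    using onorm_compose[OF blR blD] by (simp add: onorm_neg comp_def)
  finally show ?thesis by (simp add: D_def comp_def)
qed

lemma onorm_funpow_sub_id_le:
  fixes B :: "'a::real_normed_vector \<Rightarrow> 'a"
  assumes blB: "bounded_linear B" and oB: "onorm B \<le> 2"
  shows "onorm (\<lambda>x. (B ^^ j) x - x) \<le> (2 ^ j - 1) * onorm (\<lambda>x. B x - x)"
proof (induction j)
  case 0
  show ?case by (simp add: onorm_zero)
next
  case (Suc j)
  define R where "R = (\<lambda>x. (B ^^ j) x - x)"
  define E where "E = (\<lambda>x. B x - x)"
  have blR: "bounded_linear R" unfolding R_def
    by (intro bounded_linear_sub bounded_linear_funpow blB bounded_linear_ident)
  have blE: "bounded_linear E" unfolding E_def
    by (intro bounded_linear_sub blB bounded_linear_ident)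
  have lB: "linear B" using blB bounded_linear.linear by blast
  have "(\<lambda>x. (B ^^ Suc j) x - x) = (\<lambda>x. (B \<circ> R) x + E x)"
    by (auto simp: R_def E_def fun_eq_iff linear_diff[OF lB])
  then have "onorm (\<lambda>x. (B ^^ Suc j) x - x) \<le> onorm (B \<circ> R) + onorm E"
    using onorm_triangle[OF bounded_linear_compose[OF blB blR] blE] by (simp add: comp_def)
  also have "\<dots> \<le> onorm B * onorm R + onorm E"
    using onorm_compose[OF blB blR] by linarith
  also have "\<dots> \<le> 2 * ((2 ^ j - 1) * onorm E) + onorm E"
    using Suc oB onorm_pos_le[OF blB] onorm_pos_le[OF blR]
    by (intro add_right_mono mult_mono) (auto simp: R_def E_def)
  also have "\<dots> = (2 ^ Suc j - 1) * onorm E" by (simp add: algebra_simps)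
  finally show ?case by (simp add: E_def)
qed

lemma onorm_funpow_sub_id_linear_part_le:
  fixes B :: "'a::real_normed_vector \<Rightarrow> 'a"
  assumes blB: "bounded_linear B" and oB: "onorm B \<le> 2"
  shows "onorm (\<lambda>x. (B ^^ j) x - x - real j *\<^sub>R (B x - x)) \<le> 2 ^ j * (onorm (\<lambda>x. B x - x))\<^sup>2"
proof (induction j)
  case 0
  show ?case by (simp add: onorm_zero)
next
  case (Suc j)
  define T where "T = (\<lambda>x. (B ^^ j) x - x - real j *\<^sub>R (B x - x))"
  define R where "R = (\<lambda>x. (B ^^ j) x - x)"
  define E where "E = (\<lambda>x. B x - x)"
  have blE: "bounded_linear E" unfolding E_def
    by (intro bounded_linear_sub blB bounded_linear_ident)
  have blR: "bounded_linear R" unfolding R_def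
    by (intro bounded_linear_sub bounded_linear_funpow blB bounded_linear_ident)
  have blT: "bounded_linear T" unfolding T_def
    by (intro bounded_linear_sub bounded_linear_funpow blB bounded_linear_ident
        bounded_linear_compose[OF bounded_linear_scaleR_right blE[unfolded E_def]])
  have lBj: "linear (B ^^ j)" using bounded_linear_funpow[OF blB] bounded_linear.linear by blast
  have "(\<lambda>x. (B ^^ Suc j) x - x - real (Suc j) *\<^sub>R (B x - x)) = (\<lambda>x. T x + (R \<circ> E) x)"
    by (auto simp: T_def R_def E_def fun_eq_iff funpow_swap1 linear_diff[OF lBj] algebra_simps)
  then have "onorm (\<lambda>x. (B ^^ Suc j) x - x - real (Suc j) *\<^sub>R (B x - x))
      \<le> onorm T + onorm R * onorm E"
    using onorm_triangle[OF blT bounded_linear_compose[OF blR blE]] onorm_compose[OF blR blE]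
    by (simp add: comp_def)
  also have "\<dots> \<le> 2 ^ j * (onorm E)\<^sup>2 + ((2 ^ j - 1) * onorm E) * onorm E"
    using Suc onorm_funpow_sub_id_le[OF blB oB, of j] onorm_pos_le[OF blE]
    by (intro add_mono mult_right_mono) (auto simp: T_def R_def E_def)
  also have "\<dots> \<le> 2 ^ Suc j * (onorm E)\<^sup>2"
    using onorm_pos_le[OF blE] by (simp add: algebra_simps power2_eq_square)
  finally show ?case by (simp add: E_def)
qed

lemma onorm_funpow_sub_id_ge:
  fixes B :: "'a::real_normed_vector \<Rightarrow> 'a"
  assumes blB: "bounded_linear B" and oB: "onorm B \<le> 2"
  shows "real j * onorm (\<lambda>x. B x - x) - 2 ^ j * (onorm (\<lambda>x. B x - x))\<^sup>2
      \<le> onorm (\<lambda>x. (B ^^ j) x - x)"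
proof -
  define R where "R = (\<lambda>x. (B ^^ j) x - x)"
  define T where "T = (\<lambda>x. (B ^^ j) x - x - real j *\<^sub>R (B x - x))"
  have blE: "bounded_linear (\<lambda>x. B x - x)"
    by (intro bounded_linear_sub blB bounded_linear_ident)
  have blR: "bounded_linear R" unfolding R_def
    by (intro bounded_linear_sub bounded_linear_funpow blB bounded_linear_ident)
  have blT: "bounded_linear T" unfolding T_def
    by (intro bounded_linear_sub bounded_linear_funpow blB bounded_linear_ident
        bounded_linear_compose[OF bounded_linear_scaleR_right blE])
  have "real j * onorm (\<lambda>x. B x - x) = onorm (\<lambda>x. R x + - T x)"
    using onorm_scaleR[OF blE, of "real j"] by (simp add: R_def T_def)
  also have "\<dots> \<le> onorm R + onorm T"
    using onorm_triangle[OF blR bounded_linear_minus[OF blT]] by (simp add: onorm_neg)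
  finally show ?thesis
    using onorm_funpow_sub_id_linear_part_le[OF blB oB, of j] by (simp add: R_def T_def)
qed

lemma onorm_funpow_sub_id_ge_of_near_id:
  fixes B :: "'a::real_normed_vector \<Rightarrow> 'a"
  assumes blB: "bounded_linear B" and small: "2 ^ j * onorm (\<lambda>x. B x - x) \<le> 1/4"
  shows "(real j - 1/4) * onorm (\<lambda>x. B x - x) \<le> onorm (\<lambda>x. (B ^^ j) x - x)"
proof -
  define e where "e = onorm (\<lambda>x. B x - x)"
  have e0: "e \<ge> 0" unfolding e_def
    by (intro onorm_pos_le bounded_linear_sub blB bounded_linear_ident)
  have "e \<le> 2 ^ j * e" using mult_right_mono[OF one_le_power[of "2::real" j] e0] by simp
  then have oB: "onorm B \<le> 2"
    using small onorm_le_abs_add_onorm_sub_scaleR[OF blB, of 1] by (simp add: e_def)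
  have "2 ^ j * e\<^sup>2 \<le> e / 4"
    using mult_right_mono[OF small[folded e_def] e0] by (simp add: power2_eq_square mult.assoc)
  then show ?thesis
    using onorm_funpow_sub_id_ge[OF blB oB, of j] by (simp add: e_def algebra_simps)
qed

lemma inverse_add_lt_inverse_sub_mult:
  fixes K :: real
  assumes K2: "K \<ge> 2"
  shows "inverse K + 1 / (4 * (K + 1)) < (inverse K - 1 / (4 * (K + 1))) * (K - 1/4)"
proof -
  define \<delta> where "\<delta> = 1 / (4 * (K + 1))"
  have "\<delta> * (K + 3/4) < 1/4" using K2 by (simp add: \<delta>_def field_simps)
  moreover have "5 / (4 * K) \<le> 5/8" using K2 by (simp add: field_simps)
  moreover have "(inverse K - \<delta>) * (K - 1/4) - (inverse K + \<delta>) = 1 - 5 / (4 * K) - \<delta> * (K + 3/4)"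
    using K2 by (simp add: field_simps)
  ultimately have "inverse K + \<delta> < (inverse K - \<delta>) * (K - 1/4)" by linarith
  then show ?thesis by (simp add: \<delta>_def)
qed

lemma linear_eq_id_of_conj_to_power:
  fixes A B :: "'a::real_normed_vector \<Rightarrow> 'a" and k :: nat
  assumes blA: "bounded_linear A" and blB: "bounded_linear B" and k2: "k \<ge> 2"
    and rel: "A \<circ> B = (B ^^ k) \<circ> A"
    and hA: "onorm (\<lambda>x. A x - inverse (real k) *\<^sub>R x) < 1 / (4 * (real k + 1))"
    and hB: "onorm (\<lambda>x. B x - x) < 1 / (4 * 2 ^ k)"
  shows "B = id"
proof -
  define K where "K = real k"
  define \<delta> where "\<delta> = 1 / (4 * (K + 1))"
  define E where "E = (\<lambda>x. B x - x)"
  define R where "R = (\<lambda>x. (B ^^ k) x - x)"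
  define e where "e = onorm E"
  have K2: "K \<ge> 2" using k2 by (simp add: K_def)
  have blE: "bounded_linear E" unfolding E_def
    by (intro bounded_linear_sub blB bounded_linear_ident)
  have blR: "bounded_linear R" unfolding R_def
    by (intro bounded_linear_sub bounded_linear_funpow blB bounded_linear_ident)
  have e0: "e \<ge> 0" unfolding e_def by (rule onorm_pos_le[OF blE])
  have "2 ^ k * e \<le> 1/4" using hB by (simp add: e_def E_def field_simps)
  then have R_ge: "(K - 1/4) * e \<le> onorm R"
    using onorm_funpow_sub_id_ge_of_near_id[OF blB] by (simp add: K_def R_def e_def E_def)
  have lA: "linear A" using blA bounded_linear.linear by blast
  have "A (B x) = (B ^^ k) (A x)" for x using rel by (metis comp_apply)
  then have conj: "R \<circ> A = A \<circ> E" by (auto simp: E_def R_def fun_eq_iff linear_diff[OF lA])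
  have A_le: "onorm A \<le> inverse K + \<delta>"
    using onorm_le_abs_add_onorm_sub_scaleR[OF blA, of "inverse K"] hA K2 by (simp add: K_def \<delta>_def)
  have "onorm (R \<circ> A) = onorm (A \<circ> E)" using conj by simp
  also have "\<dots> \<le> onorm A * e" using onorm_compose[OF blA blE] by (simp add: e_def)
  also have "\<dots> \<le> (inverse K + \<delta>) * e" using A_le e0 by (rule mult_right_mono)
  finally have RA_le: "onorm (R \<circ> A) \<le> (inverse K + \<delta>) * e" .
  have "inverse K * onorm R \<le> onorm (R \<circ> A) + onorm R * onorm (\<lambda>x. A x - inverse K *\<^sub>R x)"
    using onorm_comp_near_scaleR_ge[OF blR blA, of "inverse K"] K2 by simp
  also have "\<dots> \<le> onorm (R \<circ> A) + onorm R * \<delta>"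
    using hA onorm_pos_le[OF blR] by (intro add_left_mono mult_left_mono) (simp_all add: K_def \<delta>_def)
  finally have "(inverse K - \<delta>) * onorm R \<le> (inverse K + \<delta>) * e"
    using RA_le by (simp add: algebra_simps)
  moreover have "(inverse K - \<delta>) * ((K - 1/4) * e) \<le> (inverse K - \<delta>) * onorm R"
    using R_ge K2 by (intro mult_left_mono) (simp_all add: \<delta>_def field_simps)
  ultimately have "((inverse K - \<delta>) * (K - 1/4) - (inverse K + \<delta>)) * e \<le> 0"
    by (simp add: algebra_simps)
  moreover have "inverse K + \<delta> < (inverse K - \<delta>) * (K - 1/4)"
    unfolding \<delta>_def by (rule inverse_add_lt_inverse_sub_mult[OF K2])
  ultimately have "e = 0" using e0 by (simp add: mult_le_0_iff)
  then show ?thesis using onorm_eq_0[OF blE] by (auto simp: e_def E_def fun_eq_iff)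
qed

lemma local_diffeo_has_derivative_D0:
  assumes "local_diffeo F"
  shows "(F has_derivative D0 F) (at 0)"
proof -
  from assms obtain U where "0 \<in> U" "\<forall>x\<in>U. F differentiable (at x)"
    unfolding local_diffeo_def by blast
  then show ?thesis unfolding D0_def by (simp add: frechet_derivative_works[symmetric])
qed

lemma has_derivative_funpow_at_fixpoint:
  fixes g :: "'a::real_normed_vector \<Rightarrow> 'a"
  assumes dg: "(g has_derivative G) (at x)" and fixed: "g x = x"
  shows "((g ^^ j) has_derivative G ^^ j) (at x)"
proof (induction j)
  case 0
  show ?case by (simp add: id_def has_derivative_ident)
next
  case (Suc j)
  have "(g ^^ j) x = x" using fixed by (induction j) simp_all
  then have "((g \<circ> g ^^ j) has_derivative G \<circ> G ^^ j) (at x)"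
    using Suc dg by (intro diff_chain_at) simp_all
  then show ?case by (simp add: comp_def)
qed

lemma germ_eq_has_derivative_unique:
  fixes f g :: "real^'m \<Rightarrow> real^'m"
  assumes "germ_eq f g" "(f has_derivative F) (at 0)" "(g has_derivative G) (at 0)"
  shows "F = G"
proof -
  from assms(1) obtain S where S: "open S" "0 \<in> S" "\<forall>x\<in>S. f x = g x"
    unfolding germ_eq_def eventually_nhds by blast
  have "(g has_derivative F) (at 0)"
    using has_derivative_transform_within_open[OF assms(2) S(1) S(2)] S(3) by auto
  then show ?thesis using assms(3) has_derivative_unique by blast
qed

lemma is_hom_D0_conj_to_power:
  assumes hom: "is_hom n k ga gb" and i: "i < n"
  shows "D0 ga \<circ> D0 (gb i) = D0 (gb i) ^^ k \<circ> D0 ga"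
proof -
  have ld: "local_diffeo ga" "local_diffeo (gb i)" and rel: "germ_eq (ga \<circ> gb i) ((gb i ^^ k) \<circ> ga)"
    using hom i unfolding is_hom_def by auto
  have da: "(ga has_derivative D0 ga) (at 0)" "ga 0 = 0"
    using local_diffeo_has_derivative_D0[OF ld(1)] ld(1) by (auto simp: local_diffeo_def)
  have db: "(gb i has_derivative D0 (gb i)) (at 0)" "gb i 0 = 0"
    using local_diffeo_has_derivative_D0[OF ld(2)] ld(2) by (auto simp: local_diffeo_def)
  have "((ga \<circ> gb i) has_derivative D0 ga \<circ> D0 (gb i)) (at 0)"
    using db da by (intro diff_chain_at) simp_all
  moreover have "((gb i ^^ k \<circ> ga) has_derivative D0 (gb i) ^^ k \<circ> D0 ga) (at 0)"
    using da has_derivative_funpow_at_fixpoint[OF db] by (intro diff_chain_at) simp_all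
  ultimately show ?thesis by (rule germ_eq_has_derivative_unique[OF rel])
qed

lemma C1loc_nbhd_basic:
  assumes "finite W" "\<forall>w\<in>W. valid_word n w" "\<epsilon> > 0"
  shows "C1loc_nbhd n k fa fb {(ga, gb). is_hom n k ga gb \<and>
           (\<forall>w\<in>W. dC1 (eval_word ga gb w) (eval_word fa fb w) < \<epsilon>)}"
  unfolding C1loc_nbhd_def using assms by blast

theorem lemma2p2:
  fixes fa :: "real^'m \<Rightarrow> real^'m" and fb :: "nat \<Rightarrow> real^'m \<Rightarrow> real^'m" and n k :: nat
  assumes "n \<ge> 1" and "k \<ge> 2"
    and "is_hom n k fa fb"
    and "D0 fa = (\<lambda>x. inverse (real k) *\<^sub>R x)"
    and "\<forall>i<n. D0 (fb i) = id"
  shows "\<exists>U. C1loc_nbhd n k fa fb U \<and>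
           (\<forall>(ga, gb)\<in>U. \<forall>i<n. D0 (gb i) = id)"
proof -
  define \<epsilon> :: real where "\<epsilon> = min (1 / (4 * (real k + 1))) (1 / (4 * 2 ^ k))"
  define W where "W = insert [(None, True)] ((\<lambda>i. [(Some i, True)]) ` {..<n})"
  define U where "U = {(ga, gb). is_hom n k ga gb \<and>
           (\<forall>w\<in>W. dC1 (eval_word ga gb w) (eval_word fa fb w) < \<epsilon>)}"
  have "C1loc_nbhd n k fa fb U"
    unfolding U_def by (rule C1loc_nbhd_basic) (auto simp: W_def valid_word_def \<epsilon>_def)
  moreover have "D0 (gb i) = id" if gU: "(ga, gb) \<in> U" and i: "i < n" for ga gb i
  proof -
    have hom: "is_hom n k ga gb" using gU by (simp add: U_def)
    then have "local_diffeo ga" "local_diffeo (gb i)" using i by (auto simp: is_hom_def)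
    then have bl: "bounded_linear (D0 ga)" "bounded_linear (D0 (gb i))"
      by (auto intro: has_derivative_bounded_linear local_diffeo_has_derivative_D0)
    have "dC1 ga fa < \<epsilon>" "dC1 (gb i) (fb i) < \<epsilon>" using gU i by (auto simp: U_def W_def)
    then have "onorm (\<lambda>x. D0 ga x - inverse (real k) *\<^sub>R x) < 1 / (4 * (real k + 1))"
      and "onorm (\<lambda>x. D0 (gb i) x - x) < 1 / (4 * 2 ^ k)"
      using assms(4,5) i by (auto simp: dC1_def \<epsilon>_def)
    with bl assms(2) is_hom_D0_conj_to_power[OF hom i] show ?thesis
      by (rule linear_eq_id_of_conj_to_power)
  qed
  ultimately show ?thesis by blast
qed

end
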